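(* Let $Z$ be a reflection positive volume-dependent field theory, let $\Sigma$ be a nonempty closed $(n-1)$-manifold, and for each $\lambda\in\mathrm{Spec}(H_\Sigma)$ let $g_\lambda:\mathcal H^\lambda_\Sigma\to\mathbb C$ be linear. If $g=\sum_{\lambda\in\mathrm{Spec}(H_\Sigma)}g_\lambda\circ\pi_\lambda$ defines a continuous map $\check E_\Sigma\to\mathbb C$, then for all $t>0$ there exists $C>0$ such that $\|g_\lambda\|<Ce^{t\lambda}$ for all $\lambda\in\mathrm{Spec}(H_\Sigma)$.
   Context: A reflection positive volume-dependent field theory $Z$ (a nuclear, holomorphic, coherent symmetric monoidal functor from $n$-dimensional bordisms of germs equipped with complex densities of positive real part to nuclear pairs — continuous injective dense maps from nuclear dual Fréchet to nuclear Fréchet spaces — which is equivariant for reflection/conjugation and sends reflection-fixed objects to Hermitian nuclear pairs) assigns to each closed $(n-1)$-manifold $\Sigma$ (using a fixed translation-invariant density $\nu_\Sigma\wedge dt$ on $\Sigma\times\mathbb R$, $\nu_\Sigma$ positive of volume 1) a Hilbert space $\mathcal H_\Sigma$ and a self-adjoint operator $H_\Sigma$ with discrete spectrum bounded below and finite-dimensional eigenspaces $\mathcal H_\Sigma^\lambda$, such that cylinders $\Sigma\times I$ of complex volume $s$ act by $\exp(-sH_\Sigma)$. The Hermitian nuclear pair assigned to $\Sigma$ is $\check E_\Sigma\subset\mathcal H_\Sigma\subset\hat E_\Sigma$ with $\check E_\Sigma=\{(v_\lambda)\in\prod_{\lambda}\mathcal H^\lambda_\Sigma:\exists\tau\in\mathbb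 C_{>0},\ (e^{\tau\lambda}v_\lambda)\in\mathcal H_\Sigma\}$, carrying the colimit topology of copies of $\mathcal H_\Sigma$ under the maps $e^{-\tau H_\Sigma}$. $\pi_\lambda:\mathcal H_\Sigma\to\mathcal H^\lambda_\Sigma$ is the orthogonal projection (extended componentwise to families). *)

theory Defs
  imports "HOL-Analysis.Analysis"
begin

text \<open>Concrete model of the spectral data of H_Sigma: eigenvalue set Spec (a set of reals),
  eigenspace of eigenvalue l modelled isometrically as C^(d l), i.e. vectors nat => complex
  vanishing from index d l on, with the standard Hermitian norm.  The Hilbert space H_Sigma is
  the l2 direct sum of the eigenspaces.\<close>

type_synonym family = "real \<Rightarrow> nat \<Rightarrow> complex"

definition eigspace :: "nat \<Rightarrow> (nat \<Rightarrow> complex) set" where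
  "eigspace d = {v. \<forall>i\<ge>d. v i = 0}"

definition eignorm :: "nat \<Rightarrow> (nat \<Rightarrow> complex) \<Rightarrow> real" where
  "eignorm d v = sqrt (\<Sum>i<d. (cmod (v i))\<^sup>2)"

definition clinear_on :: "(nat \<Rightarrow> complex) set \<Rightarrow> ((nat \<Rightarrow> complex) \<Rightarrow> complex) \<Rightarrow> bool" where
  "clinear_on V f \<longleftrightarrow>
     (\<forall>x\<in>V. \<forall>y\<in>V. f (\<lambda>i. x i + y i) = f x + f y) \<and>
     (\<forall>c::complex. \<forall>x\<in>V. f (\<lambda>i. c * x i) = c * f x)"

definition opnorm :: "nat \<Rightarrow> ((nat \<Rightarrow> complex) \<Rightarrow> complex) \<Rightarrow> real" where
  "opnorm d f = Sup {cmod (f v) | v. v \<in> eigspace d \<and> eignorm d v \<le> 1}"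

definition prodfam :: "real set \<Rightarrow> (real \<Rightarrow> nat) \<Rightarrow> family set" where
  "prodfam Spec d = {v. (\<forall>l\<in>Spec. v l \<in> eigspace (d l)) \<and> (\<forall>l. l \<notin> Spec \<longrightarrow> v l = (\<lambda>_. 0))}"

definition hilb :: "real set \<Rightarrow> (real \<Rightarrow> nat) \<Rightarrow> family set" where
  "hilb Spec d = {v \<in> prodfam Spec d. (\<lambda>l. (eignorm (d l) (v l))\<^sup>2) summable_on Spec}"

definition hnorm :: "real set \<Rightarrow> (real \<Rightarrow> nat) \<Rightarrow> family \<Rightarrow> real" where
  "hnorm Spec d v = sqrt (\<Sum>\<^sub>\<infinity>l\<in>Spec. (eignorm (d l) (v l))\<^sup>2)"

definition hilb_top :: "real set \<Rightarrow> (real \<Rightarrow> nat) \<Rightarrow> family topology" where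
  "hilb_top Spec d = topology (\<lambda>S. S \<subseteq> hilb Spec d \<and>
     (\<forall>x\<in>S. \<exists>e>0. \<forall>y\<in>hilb Spec d. hnorm Spec d (\<lambda>l i. y l i - x l i) < e \<longrightarrow> y \<in> S))"

definition heat :: "complex \<Rightarrow> family \<Rightarrow> family" where
  "heat tau v = (\<lambda>l i. exp (- tau * complex_of_real l) * v l i)"

definition Echeck :: "real set \<Rightarrow> (real \<Rightarrow> nat) \<Rightarrow> family set" where
  "Echeck Spec d = {v \<in> prodfam Spec d. \<exists>tau. Re tau > 0 \<and> heat (- tau) v \<in> hilb Spec d}"

text \<open>Colimit (final) topology on Echeck with respect to the maps exp(-tau H) : H_Sigma -> Echeck.\<close>
definition Echeck_top :: "real set \<Rightarrow> (real \<Rightarrow> nat) \<Rightarrow> family topology" where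
  "Echeck_top Spec d = topology (\<lambda>U. U \<subseteq> Echeck Spec d \<and>
     (\<forall>tau. Re tau > 0 \<longrightarrow> openin (hilb_top Spec d) {w \<in> hilb Spec d. heat tau w \<in> U}))"

end

theory Submission
  imports Defs
begin

text \<open>Continuity of the functional at 0 for the final topology on Echeck means that for
  every t > 0 the composite w \<mapsto> g (exp(-tH) w) maps some ball of radius e around 0 in the
  Hilbert space into the unit disc.  Testing this on vectors of norm e/2 lying in the single
  eigenspace of l, on which exp(-tH) acts as the scalar exp(-tl), gives
  exp(-tl) (e/2) |g_l v| < 1 for every unit vector v, i.e. a bound 2/e exp(tl) on the norm of g_l.\<close>

lemma istopology_radius_open:
  "istopology (\<lambda>S. S \<subseteq> H \<and> (\<forall>x\<in>S. \<exists>e>0. \<forall>y\<in>H. N x y < (e::real) \<longrightarrow> y \<in> S))"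
  unfolding istopology_def
proof (intro conjI allI impI ballI)
  fix S T
  assume S: "S \<subseteq> H \<and> (\<forall>x\<in>S. \<exists>e>0. \<forall>y\<in>H. N x y < e \<longrightarrow> y \<in> S)"
    and T: "T \<subseteq> H \<and> (\<forall>x\<in>T. \<exists>e>0. \<forall>y\<in>H. N x y < e \<longrightarrow> y \<in> T)"
  show "S \<inter> T \<subseteq> H" using S by auto
  fix x assume "x \<in> S \<inter> T"
  then obtain e1 e2 where "e1 > 0" "e2 > 0"
      "\<forall>y\<in>H. N x y < e1 \<longrightarrow> y \<in> S" "\<forall>y\<in>H. N x y < e2 \<longrightarrow> y \<in> T"
    using S T by blast
  then show "\<exists>e>0. \<forall>y\<in>H. N x y < e \<longrightarrow> y \<in> S \<inter> T"
    by (intro exI[of _ "min e1 e2"]) auto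
next
  fix \<K>
  assume \<K>: "\<forall>K\<in>\<K>. K \<subseteq> H \<and> (\<forall>x\<in>K. \<exists>e>0. \<forall>y\<in>H. N x y < e \<longrightarrow> y \<in> K)"
  then show "\<Union>\<K> \<subseteq> H" by blast
  fix x assume "x \<in> \<Union>\<K>"
  then obtain K where K: "K \<in> \<K>" "x \<in> K" by blast
  with \<K> obtain e where "e > 0" "\<forall>y\<in>H. N x y < e \<longrightarrow> y \<in> K"
    by meson
  with K show "\<exists>e>0. \<forall>y\<in>H. N x y < e \<longrightarrow> y \<in> \<Union>\<K>" by blast
qed

lemma istopology_final:
  "istopology (\<lambda>U. U \<subseteq> E \<and> (\<forall>i. P i \<longrightarrow> openin X {w \<in> A. f i w \<in> U}))"
  unfolding istopology_def
proof (intro conjI allI impI ballI)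
  fix S T i
  assume S: "S \<subseteq> E \<and> (\<forall>i. P i \<longrightarrow> openin X {w \<in> A. f i w \<in> S})"
    and T: "T \<subseteq> E \<and> (\<forall>i. P i \<longrightarrow> openin X {w \<in> A. f i w \<in> T})"
  show "S \<inter> T \<subseteq> E" using S by auto
  assume "P i"
  then have "openin X ({w \<in> A. f i w \<in> S} \<inter> {w \<in> A. f i w \<in> T})"
    using S T by (intro openin_Int) auto
  moreover have "{w \<in> A. f i w \<in> S} \<inter> {w \<in> A. f i w \<in> T} = {w \<in> A. f i w \<in> S \<inter> T}"
    by auto
  ultimately show "openin X {w \<in> A. f i w \<in> S \<inter> T}" by simp
next
  fix \<K> i
  assume \<K>: "\<forall>K\<in>\<K>. K \<subseteq> E \<and> (\<forall>i. P i \<longrightarrow> openin X {w \<in> A. f i w \<in> K})"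
  then show "\<Union>\<K> \<subseteq> E" by auto
  assume "P i"
  then have "openin X (\<Union>K\<in>\<K>. {w \<in> A. f i w \<in> K})"
    using \<K> by (intro openin_Union) auto
  moreover have "(\<Union>K\<in>\<K>. {w \<in> A. f i w \<in> K}) = {w \<in> A. f i w \<in> \<Union>\<K>}"
    by auto
  ultimately show "openin X {w \<in> A. f i w \<in> \<Union>\<K>}" by simp
qed

lemma openin_hilb_top:
  "openin (hilb_top Spec d) S \<longleftrightarrow> S \<subseteq> hilb Spec d \<and>
     (\<forall>x\<in>S. \<exists>e>0. \<forall>y\<in>hilb Spec d. hnorm Spec d (\<lambda>l i. y l i - x l i) < e \<longrightarrow> y \<in> S)"
  unfolding hilb_top_def
  using topology_inverse'[OF istopology_radius_open[where
      N = "\<lambda>x y. hnorm Spec d (\<lambda>l i. y l i - x l i)"]]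
  by simp

lemma openin_Echeck_top:
  "openin (Echeck_top Spec d) U \<longleftrightarrow> U \<subseteq> Echeck Spec d \<and>
     (\<forall>tau. Re tau > 0 \<longrightarrow> openin (hilb_top Spec d) {w \<in> hilb Spec d. heat tau w \<in> U})"
  unfolding Echeck_top_def
  using topology_inverse'[OF istopology_final[where P = "\<lambda>tau. Re tau > 0" and f = heat]]
  by simp

lemma zero_in_hilb: "(\<lambda>_ _. 0) \<in> hilb Spec d"
  unfolding hilb_def prodfam_def eigspace_def eignorm_def by simp

lemma heat_in_Echeck:
  assumes "w \<in> hilb Spec d" "Re tau > 0"
  shows "heat tau w \<in> Echeck Spec d"
proof -
  have "heat (- tau) (heat tau w) = w"
    unfolding heat_def by (simp add: mult.assoc[symmetric] exp_add[symmetric])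
  moreover have "heat tau w \<in> prodfam Spec d"
    using assms(1) unfolding hilb_def prodfam_def eigspace_def heat_def by auto
  ultimately show ?thesis using assms unfolding Echeck_def by auto
qed

lemma topspace_Echeck_top: "topspace (Echeck_top Spec d) = Echeck Spec d"
proof -
  have "{w \<in> hilb Spec d. heat tau w \<in> Echeck Spec d} = hilb Spec d" if "Re tau > 0" for tau
    using heat_in_Echeck that by auto
  moreover have "openin (hilb_top Spec d) (hilb Spec d)"
    unfolding openin_hilb_top by (auto intro: exI[of _ 1])
  ultimately have "openin (Echeck_top Spec d) (Echeck Spec d)"
    unfolding openin_Echeck_top by simp
  then have "Echeck Spec d \<subseteq> topspace (Echeck_top Spec d)"
    by (rule openin_subset)
  moreover have "topspace (Echeck_top Spec d) \<subseteq> Echeck Spec d"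
    using openin_topspace[of "Echeck_top Spec d"] unfolding openin_Echeck_top by (rule conjunct1)
  ultimately show ?thesis by (rule antisym[rotated])
qed

lemma clinear_on_scale:
  assumes "clinear_on V f" "x \<in> V"
  shows "f (\<lambda>i. c * x i) = c * f x"
  using assms unfolding clinear_on_def by blast

lemma clinear_on_eigspace_zero:
  assumes "clinear_on (eigspace n) f"
  shows "f (\<lambda>_. 0) = 0"
  using clinear_on_scale[OF assms, of "\<lambda>_. 0" 0] by (simp add: eigspace_def)

lemma eignorm_nonneg: "eignorm n v \<ge> 0"
  unfolding eignorm_def by (simp add: sum_nonneg)

lemma eignorm_scale: "eignorm n (\<lambda>i. c * v i) = cmod c * eignorm n v"
proof -
  have "(\<Sum>i<n. (cmod (c * v i))\<^sup>2) = (cmod c)\<^sup>2 * (\<Sum>i<n. (cmod (v i))\<^sup>2)"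
    by (simp add: norm_mult power_mult_distrib sum_distrib_left)
  then show ?thesis unfolding eignorm_def by (simp add: real_sqrt_mult)
qed

lemma opnorm_le:
  assumes "\<And>v. v \<in> eigspace n \<Longrightarrow> eignorm n v \<le> 1 \<Longrightarrow> cmod (f v) \<le> B"
  shows "opnorm n f \<le> B"
  unfolding opnorm_def
proof (rule cSup_least)
  have "(\<lambda>_. 0) \<in> eigspace n" "eignorm n (\<lambda>_. 0) \<le> 1"
    by (auto simp: eigspace_def eignorm_def)
  then show "{cmod (f v) |v. v \<in> eigspace n \<and> eignorm n v \<le> 1} \<noteq> {}" by blast
next
  fix x
  assume "x \<in> {cmod (f v) |v. v \<in> eigspace n \<and> eignorm n v \<le> 1}"
  then show "x \<le> B" using assms by blast
qed

definition single_family :: "real \<Rightarrow> (nat \<Rightarrow> complex) \<Rightarrow> family" where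
  "single_family l v = (\<lambda>l'. if l' = l then v else (\<lambda>_. 0))"

lemma infsum_single_point:
  fixes f :: "'a \<Rightarrow> 'b::{comm_monoid_add, t2_space}"
  assumes "a \<in> S" "\<And>x. x \<in> S \<Longrightarrow> x \<noteq> a \<Longrightarrow> f x = 0"
  shows "f summable_on S" "infsum f S = f a"
proof -
  have "f summable_on S \<longleftrightarrow> f summable_on {a}"
    by (rule summable_on_cong_neutral) (use assms in auto)
  then show "f summable_on S" by simp
  have "infsum f S = infsum f {a}"
    by (rule infsum_cong_neutral) (use assms in auto)
  then show "infsum f S = f a" by simp
qed

lemma
  assumes "l \<in> Spec" "v \<in> eigspace (d l)"
  shows single_family_in_hilb: "single_family l v \<in> hilb Spec d"
    and hnorm_single_family: "hnorm Spec d (single_family l v) = eignorm (d l) v"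
proof -
  let ?sq = "\<lambda>l'. (eignorm (d l') (single_family l v l'))\<^sup>2"
  have "?sq l' = 0" if "l' \<noteq> l" for l'
    using that by (simp add: single_family_def eignorm_def)
  then have "?sq summable_on Spec" and sum: "(\<Sum>\<^sub>\<infinity>l'\<in>Spec. ?sq l') = (eignorm (d l) v)\<^sup>2"
    using infsum_single_point[of l Spec ?sq] assms(1) by (auto simp: single_family_def)
  moreover have "single_family l v \<in> prodfam Spec d"
    using assms unfolding prodfam_def eigspace_def single_family_def by auto
  ultimately show "single_family l v \<in> hilb Spec d"
    unfolding hilb_def by simp
  show "hnorm Spec d (single_family l v) = eignorm (d l) v"
    unfolding hnorm_def sum using eignorm_nonneg by simp
qed

lemma heat_single_family:
  "heat tau (single_family l v) = single_family l (\<lambda>i. exp (- tau * of_real l) * v i)"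
  unfolding heat_def single_family_def by auto

lemma infsum_single_family:
  assumes "l \<in> Spec" "\<forall>l'\<in>Spec. clinear_on (eigspace (d l')) (g l')"
  shows "(\<Sum>\<^sub>\<infinity>l'\<in>Spec. g l' (single_family l v l')) = g l v"
proof -
  have "g l' (single_family l v l') = 0" if "l' \<in> Spec" "l' \<noteq> l" for l'
    using that assms(2) clinear_on_eigspace_zero by (auto simp: single_family_def)
  then show ?thesis
    using infsum_single_point(2)[of l Spec "\<lambda>l'. g l' (single_family l v l')"] assms(1)
    by (simp add: single_family_def)
qed

lemma continuous_Echeck_heat_ball:
  assumes cont: "continuous_map (Echeck_top Spec d) euclidean F"
    and F0: "F (\<lambda>_ _. 0) = 0" and "t > 0"
  obtains e where "e > 0"
    "\<And>w. w \<in> hilb Spec d \<Longrightarrow> hnorm Spec d w < e \<Longrightarrow> cmod (F (heat (of_real t) w)) < 1"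
proof -
  define U where "U = {v \<in> topspace (Echeck_top Spec d). F v \<in> ball 0 1}"
  have "openin (Echeck_top Spec d) U"
    unfolding U_def by (rule openin_continuous_map_preimage[OF cont]) simp
  then have "openin (hilb_top Spec d) {w \<in> hilb Spec d. heat (of_real t) w \<in> U}"
    unfolding openin_Echeck_top using \<open>t > 0\<close> by simp
  moreover have "(\<lambda>_ _. 0) \<in> {w \<in> hilb Spec d. heat (of_real t) w \<in> U}"
    using zero_in_hilb heat_in_Echeck[OF zero_in_hilb, of 1] F0
    by (simp add: U_def topspace_Echeck_top heat_def)
  ultimately have "\<exists>e>0. \<forall>y\<in>hilb Spec d. hnorm Spec d (\<lambda>l i. y l i - 0) < e
      \<longrightarrow> y \<in> {w \<in> hilb Spec d. heat (of_real t) w \<in> U}"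
    unfolding openin_hilb_top by (elim conjE bspec)
  then show thesis
    using that by (auto simp: U_def)
qed

lemma eigen_functional_bound:
  assumes lin: "\<forall>l'\<in>Spec. clinear_on (eigspace (d l')) (g l')"
    and "e > 0"
    and small: "\<And>w. w \<in> hilb Spec d \<Longrightarrow> hnorm Spec d w < e \<Longrightarrow>
        cmod (\<Sum>\<^sub>\<infinity>l'\<in>Spec. g l' (heat (of_real t) w l')) < 1"
    and l: "l \<in> Spec" and v: "v \<in> eigspace (d l)" "eignorm (d l) v \<le> 1"
  shows "cmod (g l v) \<le> 2 / e * exp (t * l)"
proof -
  define c :: complex where "c = of_real (e / 2)"
  define a :: complex where "a = exp (- of_real t * of_real l) * c"
  let ?w = "single_family l (\<lambda>i. c * v i)"
  have cv: "(\<lambda>i. c * v i) \<in> eigspace (d l)"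
    using v(1) by (simp add: eigspace_def)
  have w_hilb: "?w \<in> hilb Spec d"
    using l cv by (rule single_family_in_hilb)
  have "hnorm Spec d ?w = eignorm (d l) (\<lambda>i. c * v i)"
    using l cv by (rule hnorm_single_family)
  also have "\<dots> = e / 2 * eignorm (d l) v"
    unfolding eignorm_scale c_def using \<open>e > 0\<close> by simp
  also have "\<dots> \<le> e / 2"
    using v(2) \<open>e > 0\<close> by (intro mult_left_le) auto
  also have "\<dots> < e"
    using \<open>e > 0\<close> by simp
  finally have "cmod (\<Sum>\<^sub>\<infinity>l'\<in>Spec. g l' (heat (of_real t) ?w l')) < 1"
    by (rule small[OF w_hilb])
  moreover have "(\<Sum>\<^sub>\<infinity>l'\<in>Spec. g l' (heat (of_real t) ?w l')) = g l (\<lambda>i. a * v i)"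
    unfolding heat_single_family infsum_single_family[OF l lin] a_def by (simp add: mult.assoc)
  moreover have "g l (\<lambda>i. a * v i) = a * g l v"
    using lin l v(1) by (blast intro: clinear_on_scale)
  moreover have "cmod a = exp (- t * l) * (e / 2)"
    using \<open>e > 0\<close> by (simp add: a_def c_def norm_mult flip: exp_of_real)
  ultimately have "exp (- t * l) * (e / 2) * cmod (g l v) < 1"
    by (simp add: norm_mult)
  then show ?thesis
    using \<open>e > 0\<close> by (simp add: exp_minus field_simps)
qed

theorem lemma3p41:
  fixes Spec :: "real set" and d :: "real \<Rightarrow> nat"
    and g :: "real \<Rightarrow> (nat \<Rightarrow> complex) \<Rightarrow> complex"
  assumes discrete: "\<forall>c. finite {l \<in> Spec. l \<le> c}"
    and dims: "\<forall>l\<in>Spec. d l > 0"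
    and lin: "\<forall>l\<in>Spec. clinear_on (eigspace (d l)) (g l)"
    and conv: "\<forall>v\<in>Echeck Spec d. (\<lambda>l. g l (v l)) summable_on Spec"
    and cont: "continuous_map (Echeck_top Spec d) euclidean (\<lambda>v. \<Sum>\<^sub>\<infinity>l\<in>Spec. g l (v l))"
  shows "\<forall>t>0. \<exists>C>0. \<forall>l\<in>Spec. opnorm (d l) (g l) < C * exp (t * l)"
proof (intro allI impI)
  fix t :: real
  assume "t > 0"
  have "(\<Sum>\<^sub>\<infinity>l\<in>Spec. g l ((\<lambda>_ _. 0) l)) = 0"
    using lin clinear_on_eigspace_zero by (intro infsum_0) blast
  then obtain e where "e > 0" and small: "\<And>w. w \<in> hilb Spec d \<Longrightarrow> hnorm Spec d w < e \<Longrightarrow>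
      cmod (\<Sum>\<^sub>\<infinity>l\<in>Spec. g l (heat (of_real t) w l)) < 1"
    using continuous_Echeck_heat_ball[OF cont _ \<open>t > 0\<close>] by blast
  have "opnorm (d l) (g l) < 4 / e * exp (t * l)" if "l \<in> Spec" for l
  proof -
    have "opnorm (d l) (g l) \<le> 2 / e * exp (t * l)"
      using eigen_functional_bound[OF lin \<open>e > 0\<close> small \<open>l \<in> Spec\<close>] by (intro opnorm_le)
    also have "\<dots> < 4 / e * exp (t * l)"
      using \<open>e > 0\<close> by (simp add: divide_strict_right_mono)
    finally show ?thesis .
  qed
  then show "\<exists>C>0. \<forall>l\<in>Spec. opnorm (d l) (g l) < C * exp (t * l)"
    using \<open>e > 0\<close> by (intro exI[of _ "4 / e"]) auto
qed

end
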